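(* Let $k\ge1$, $\alpha\ge0$, and let $X$ be a homogeneous Poisson point process in $\mathbb R^d$ of intensity $1$ with distribution $\mathbb P$. For $\varphi\in\mathbf N_o$ let $\mathfrak R_k(\varphi)=\inf\{r>0:\varphi(B_r)\ge k+1\}$ and $$\xi_{k,\alpha}(\varphi)=\frac12\sum_{x\in\varphi:\ |x|\le\mathfrak R_k(\varphi)\vee\mathfrak R_k(\varphi-x)}|x|^\alpha.$$ Then $\xi_{k,\alpha}$ is weakly decreasing, i.e., there exists $k'\ge1$ such that $$\mathbb P\big(\#\{y\in X:\ \xi_{k,\alpha}(X\cup\{o\}-y)>\xi_{k,\alpha}(X-y)\}\le k'\big)=1.$$
   Context: $\mathbf N_o$ denotes the locally finite point configurations in $\mathbb R^d$ containing the origin $o$; $\varphi(A)$ is the number of points of $\varphi$ in $A$; $B_r$ is the closed ball of radius $r$ around $o$; $\varphi-x$ denotes the configuration shifted by $-x$. $\xi_{k,\alpha}$ is the score function of the sum of $\alpha$-power-weighted edge lengths at the origin in the undirected $k$-nearest neighbor graph. *)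

theory Defs
  imports "HOL-Probability.Probability"
begin

text \<open>Point configurations are sets of points of a Euclidean space.
  phi(B_r) is the cardinality of phi intersected with the closed ball cball 0 r.\<close>

definition shift_conf :: "'a::euclidean_space set \<Rightarrow> 'a \<Rightarrow> 'a set" where
  "shift_conf \<phi> x = (\<lambda>z. z - x) ` \<phi>"

definition locally_finite_conf :: "'a::euclidean_space set \<Rightarrow> bool" where
  "locally_finite_conf \<phi> \<longleftrightarrow> (\<forall>B. bounded B \<longrightarrow> finite (\<phi> \<inter> B))"

definition knn_radius :: "nat \<Rightarrow> 'a::euclidean_space set \<Rightarrow> real" where
  "knn_radius k \<phi> = Inf {r. r > 0 \<and> card (\<phi> \<inter> cball 0 r) \<ge> k + 1}"

text \<open>Score function of the sum of alpha-power-weighted edge lengths at the origin in the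
  undirected k-nearest neighbour graph.\<close>
definition xi_knn :: "nat \<Rightarrow> real \<Rightarrow> 'a::euclidean_space set \<Rightarrow> real" where
  "xi_knn k \<alpha> \<phi> = (1/2) * (\<Sum>x\<in>{x\<in>\<phi>. norm x \<le> max (knn_radius k \<phi>) (knn_radius k (shift_conf \<phi> x))}.
                                norm x powr \<alpha>)"

definition hom_poisson_pp :: "'m measure \<Rightarrow> ('m \<Rightarrow> 'a::euclidean_space set) \<Rightarrow> bool" where
  "hom_poisson_pp M X \<longleftrightarrow>
     prob_space M \<and>
     (\<forall>\<omega>\<in>space M. locally_finite_conf (X \<omega>)) \<and>
     (\<forall>B. B \<in> sets lborel \<and> bounded B \<longrightarrow>
        (\<lambda>\<omega>. card (X \<omega> \<inter> B)) \<in> measurable M (count_space UNIV) \<and>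
        (\<forall>n. measure M {\<omega>\<in>space M. card (X \<omega> \<inter> B) = n}
               = exp (- measure lborel B) * measure lborel B ^ n / fact n)) \<and>
     (\<forall>(I::nat set) (B::nat \<Rightarrow> 'a set). finite I \<and> disjoint_family_on B I \<and>
        (\<forall>i\<in>I. B i \<in> sets lborel \<and> bounded (B i)) \<longrightarrow>
        prob_space.indep_vars M (\<lambda>_. count_space UNIV) (\<lambda>i \<omega>. card (X \<omega> \<inter> B i)) I)"

end

theory Submission
  imports Defs
begin

text \<open>Inserting a point into a configuration can only shrink k-nearest-neighbour radii, so the
  score at the origin of \<open>X - y\<close> can grow when \<open>o\<close> is added only if the new point \<open>-y\<close> itself
  becomes a neighbour of the origin: either \<open>o\<close> is among the k nearest neighbours of \<open>y\<close> in
  \<open>X \<union> {o}\<close>, or \<open>y\<close> is among the k nearest neighbours of \<open>o\<close>. Almost surely the points of the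
  Poisson process have pairwise distinct norms, and then at most k points \<open>y\<close> are of the second
  kind. Among k+1 points of the first kind lying in a cone of opening angle below 60 degrees, the
  farthest one would see the other k points and itself strictly closer than \<open>o\<close>; so each such cone
  contains at most k of them, and finitely many cones cover all directions.\<close>

lemma norm_diff_lt_if_sgn_close:
  fixes y z c :: "'a::real_inner"
  assumes "y \<noteq> 0" "z \<noteq> 0" "norm z \<le> norm y"
    and "dist (sgn y) c < 1/2" "dist (sgn z) c < 1/2"
  shows "norm (z - y) < norm y"
proof -
  define a b u v where "a = norm y" "b = norm z" "u = sgn y" "v = sgn z"
  have ab: "0 < b" "b \<le> a" using assms by (auto simp: a_b_u_v_def)
  have yz: "y = a *\<^sub>R u" "z = b *\<^sub>R v" using assms by (auto simp: a_b_u_v_def sgn_div_norm)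
  have uu: "u \<bullet> u = 1" "v \<bullet> v = 1" using assms by (auto simp: a_b_u_v_def norm_eq_1[symmetric] norm_sgn)
  have "norm (u - v) < 1" using assms(4,5) dist_triangle_half_l[of u c 1 v]
    by (simp add: a_b_u_v_def dist_norm norm_minus_commute)
  hence "(u - v) \<bullet> (u - v) < 1" by (simp add: power2_norm_eq_inner[symmetric] power_less_one_iff)
  hence uv: "1 < 2 * (u \<bullet> v)" using uu by (simp add: inner_diff_left inner_diff_right inner_commute)
  have "norm (z - y)^2 = (z - y) \<bullet> (z - y)" by (simp add: power2_norm_eq_inner)
  also have "\<dots> = b^2 + a^2 - 2 * a * b * (u \<bullet> v)"
    unfolding yz by (simp add: inner_diff_left inner_diff_right inner_commute uu power2_eq_square
        algebra_simps)
  also have "\<dots> < b^2 + a^2 - a * b" using uv ab mult_strict_left_mono[OF uv, of "a * b"]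
    by (simp add: algebra_simps)
  also have "\<dots> \<le> a^2" using ab by (simp add: power2_eq_square mult_right_mono)
  finally show ?thesis by (simp add: a_b_u_v_def power_less_imp_less_base)
qed

lemma compact_finite_ball_cover:
  fixes S :: "'a::metric_space set"
  assumes "compact S" "0 < e"
  obtains T where "finite T" "S \<subseteq> (\<Union>c\<in>T. ball c e)"
proof -
  have "S \<subseteq> (\<Union>c\<in>S. ball c e)" using assms(2) by force
  then show ?thesis by (rule compactE_image[OF assms(1) open_ball]) (rule that)
qed

lemma finite_card_le_if_no_subset_card_Suc:
  assumes "\<And>F. F \<subseteq> A \<Longrightarrow> card F = Suc k \<Longrightarrow> False"
  shows "finite A \<and> card A \<le> k"
proof (rule finite_if_finite_subsets_card_bdd)
  fix G assume "G \<subseteq> A" "finite G"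
  show "card G \<le> k"
  proof (rule ccontr)
    assume "\<not> card G \<le> k"
    then obtain F where "F \<subseteq> G" "card F = Suc k" by (metis obtain_subset_with_card_n not_less_eq_eq)
    then show False using assms \<open>G \<subseteq> A\<close> by (meson order_trans)
  qed
qed

lemma shift_conf_0 [simp]: "shift_conf P 0 = P"
  by (simp add: shift_conf_def)

lemma shift_conf_shift_conf [simp]: "shift_conf (shift_conf P a) b = shift_conf P (a + b)"
  by (auto simp: shift_conf_def image_image algebra_simps)

lemma shift_conf_insert: "shift_conf (insert a P) b = insert (a - b) (shift_conf P b)"
  by (simp add: shift_conf_def)

lemma locally_finite_conf_insert: "locally_finite_conf P \<Longrightarrow> locally_finite_conf (insert a P)"
  unfolding locally_finite_conf_def by (metis Int_insert_left finite_insert)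

lemma locally_finite_conf_shift_conf:
  assumes "locally_finite_conf P"
  shows "locally_finite_conf (shift_conf P a)"
  unfolding locally_finite_conf_def
proof (intro allI impI)
  fix B :: "'a set" assume "bounded B"
  then have "finite (P \<inter> (\<lambda>z. z + a) ` B)"
    using assms bounded_translation[of B a] by (simp add: locally_finite_conf_def add.commute)
  moreover have "shift_conf P a \<inter> B = (\<lambda>z. z - a) ` (P \<inter> (\<lambda>z. z + a) ` B)"
    by (force simp: shift_conf_def)
  ultimately show "finite (shift_conf P a \<inter> B)" by simp
qed

lemma card_translate_eq: "card ((\<lambda>z. z - a) ` F) = card (F :: 'a::ab_group_add set)"
  by (simp add: card_image inj_on_def)

lemma knn_radius_le:
  assumes "locally_finite_conf P" "0 < r" "F \<subseteq> P \<inter> cball 0 r" "card F = Suc k"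
  shows "knn_radius k P \<le> r"
  unfolding knn_radius_def
proof (rule cInf_lower)
  have "card F \<le> card (P \<inter> cball 0 r)"
    using assms by (intro card_mono) (auto simp: locally_finite_conf_def)
  then show "r \<in> {r. 0 < r \<and> k + 1 \<le> card (P \<inter> cball 0 r)}" using assms by simp
qed (auto intro: bdd_belowI[of _ 0])

lemma knn_radius_lt:
  assumes "locally_finite_conf P" "F \<subseteq> P" "card F = Suc k" "\<And>z. z \<in> F \<Longrightarrow> norm z < s"
  shows "knn_radius k P < s"
proof -
  have F: "finite F" "F \<noteq> {}" using assms(3) by (metis card.infinite Zero_not_Suc, auto)
  then obtain z where "z \<in> F" by blast
  then have "0 < s" using assms(4)[of z] norm_ge_zero[of z] by linarith
  define r where "r = max (Max (norm ` F)) (s / 2)"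
  have "Max (norm ` F) < s" using F assms(4) by simp
  then have "0 < r" "r < s" using \<open>0 < s\<close> by (simp_all add: r_def)
  moreover have "norm z \<le> r" if "z \<in> F" for z
    using F that by (simp add: r_def le_max_iff_disj)
  then have "F \<subseteq> P \<inter> cball 0 r" using assms(2) by (auto simp: mem_cball_0)
  ultimately show ?thesis using knn_radius_le[OF assms(1) \<open>0 < r\<close> _ assms(3)] by fastforce
qed

text \<open>The \<open>k + 1\<close> points \<open>F\<close> keep \<^const>\<open>knn_radius\<close> away from the unspecified value
  \<open>Inf {}\<close>.\<close>

lemma knn_radius_antimono:
  assumes "locally_finite_conf Q" "P \<subseteq> Q" "F \<subseteq> P" "card F = Suc k"
  shows "knn_radius k Q \<le> knn_radius k P"
  unfolding knn_radius_def
proof (rule cInf_superset_mono)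
  have "finite F" using assms(4) by (metis card.infinite Zero_not_Suc)
  then obtain r where "0 < r" "F \<subseteq> cball 0 r"
    by (metis bounded_pos finite_imp_bounded mem_cball_0 subsetI)
  moreover have "finite (P \<inter> cball 0 r)"
    using assms(1,2) unfolding locally_finite_conf_def
    by (meson Int_mono bounded_cball finite_subset order_refl)
  ultimately have "r \<in> {r. 0 < r \<and> k + 1 \<le> card (P \<inter> cball 0 r)}"
    using assms(3,4) card_mono[of "P \<inter> cball 0 r" F] by auto
  then show "{r. 0 < r \<and> k + 1 \<le> card (P \<inter> cball 0 r)} \<noteq> {}" by blast
  show "{r. 0 < r \<and> k + 1 \<le> card (P \<inter> cball 0 r)} \<subseteq> {r. 0 < r \<and> k + 1 \<le> card (Q \<inter> cball 0 r)}"
  proof safe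
    fix r assume "0 < r" "k + 1 \<le> card (P \<inter> cball 0 r)"
    moreover have "card (P \<inter> cball 0 r) \<le> card (Q \<inter> cball 0 r)"
      using assms(1,2) by (intro card_mono) (auto simp: locally_finite_conf_def)
    ultimately show "k + 1 \<le> card (Q \<inter> cball 0 r)" by simp
  qed
qed (auto intro: bdd_belowI[of _ 0])

text \<open>For a configuration \<open>P\<close> containing the origin: \<open>knn_out k P\<close> and \<open>knn_in k P\<close> are the
  out- and in-neighbours of \<open>o\<close> in the directed k-nearest-neighbour graph on \<open>P\<close>, and
  \<open>knn_nbrs k P\<close> is the set summed over in \<^const>\<open>xi_knn\<close>: the neighbours of \<open>o\<close> in the undirected
  graph, together with \<open>o\<close> itself.\<close>

definition knn_out :: "nat \<Rightarrow> 'a::euclidean_space set \<Rightarrow> 'a set" where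
  "knn_out k P = {x\<in>P. x \<noteq> 0 \<and> norm x \<le> knn_radius k P}"

definition knn_in :: "nat \<Rightarrow> 'a::euclidean_space set \<Rightarrow> 'a set" where
  "knn_in k P = {x\<in>P. x \<noteq> 0 \<and> norm x \<le> knn_radius k (shift_conf P x)}"

definition knn_nbrs :: "nat \<Rightarrow> 'a::euclidean_space set \<Rightarrow> 'a set" where
  "knn_nbrs k P = {x\<in>P. norm x \<le> max (knn_radius k P) (knn_radius k (shift_conf P x))}"

lemma xi_knn_eq_sum_knn_nbrs: "xi_knn k \<alpha> P = (\<Sum>x\<in>knn_nbrs k P. norm x powr \<alpha>) / 2"
  by (simp add: xi_knn_def knn_nbrs_def)

lemma finite_ex_max_norm:
  fixes F :: "'a::real_normed_vector set"
  assumes "finite F" "F \<noteq> {}"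
  obtains y where "y \<in> F" "\<And>z. z \<in> F \<Longrightarrow> norm z \<le> norm y"
proof -
  have "Max (norm ` F) \<in> norm ` F" using assms by simp
  then obtain y where "y \<in> F" "norm y = Max (norm ` F)" by auto
  then show ?thesis using that assms(1) by simp
qed

lemma card_knn_out_le:
  assumes "locally_finite_conf P" "0 \<in> P" "inj_on norm P"
  shows "finite (knn_out k P) \<and> card (knn_out k P) \<le> k"
proof (rule finite_card_le_if_no_subset_card_Suc)
  fix F assume F: "F \<subseteq> knn_out k P" "card F = Suc k"
  then have "finite F" "F \<noteq> {}" by (metis card.infinite Zero_not_Suc, auto)
  then obtain y where y: "y \<in> F" "\<And>z. z \<in> F \<Longrightarrow> norm z \<le> norm y"
    using finite_ex_max_norm by blast
  have "0 \<notin> F" "y \<noteq> 0" using F(1) y(1) by (auto simp: knn_out_def)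
  have "knn_radius k P < norm y"
  proof (rule knn_radius_lt[OF assms(1)])
    show "insert 0 (F - {y}) \<subseteq> P" using F(1) assms(2) by (auto simp: knn_out_def)
    show "card (insert 0 (F - {y})) = Suc k"
      using F(2) \<open>finite F\<close> \<open>0 \<notin> F\<close> y(1) by simp
    show "norm z < norm y" if z: "z \<in> insert 0 (F - {y})" for z
    proof (cases "z = 0")
      case False
      then have "z \<in> P" "z \<noteq> y" "norm z \<le> norm y" using z F(1) y by (auto simp: knn_out_def)
      moreover have "y \<in> P" using F(1) y(1) by (auto simp: knn_out_def)
      ultimately show ?thesis using assms(3) by (metis inj_onD order_le_less)
    qed (use \<open>y \<noteq> 0\<close> in simp)
  qed
  then show False using F(1) y(1) by (auto simp: knn_out_def)
qed

text \<open>The cone condition forces an angle below 60 degrees at \<open>o\<close>, which makes the farthest of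
  the points closer to each of the others than to \<open>o\<close>.\<close>

lemma card_knn_in_cone_le:
  assumes "locally_finite_conf P"
  shows "finite {x \<in> knn_in k P. dist (sgn x) c < 1/2} \<and> card {x \<in> knn_in k P. dist (sgn x) c < 1/2} \<le> k"
proof (rule finite_card_le_if_no_subset_card_Suc)
  fix F assume F: "F \<subseteq> {x \<in> knn_in k P. dist (sgn x) c < 1/2}" "card F = Suc k"
  then have "finite F" "F \<noteq> {}" by (metis card.infinite Zero_not_Suc, auto)
  then obtain y where y: "y \<in> F" "\<And>z. z \<in> F \<Longrightarrow> norm z \<le> norm y"
    using finite_ex_max_norm by blast
  have "knn_radius k (shift_conf P y) < norm y"
  proof (rule knn_radius_lt)
    show "locally_finite_conf (shift_conf P y)" using assms by (rule locally_finite_conf_shift_conf)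
    show "(\<lambda>z. z - y) ` F \<subseteq> shift_conf P y" using F(1) by (auto simp: knn_in_def shift_conf_def)
    show "card ((\<lambda>z. z - y) ` F) = Suc k" using F(2) by (simp add: card_translate_eq)
    show "norm w < norm y" if w: "w \<in> (\<lambda>z. z - y) ` F" for w
    proof -
      obtain z where "z \<in> F" "w = z - y" using w by blast
      then show ?thesis
        using F(1) y norm_diff_lt_if_sgn_close[of y z c] by (auto simp: knn_in_def)
    qed
  qed
  then show False using F(1) y(1) by (auto simp: knn_in_def)
qed

lemma card_knn_in_le:
  fixes P T :: "'a::euclidean_space set"
  assumes "locally_finite_conf P" "finite T" "sphere 0 1 \<subseteq> (\<Union>c\<in>T. ball c (1/2))"
  shows "finite (knn_in k P) \<and> card (knn_in k P) \<le> k * card T"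
proof -
  define C where "C c = {x \<in> knn_in k P. dist (sgn x) c < 1/2}" for c
  have C: "finite (C c) \<and> card (C c) \<le> k" for c
    unfolding C_def using assms(1) by (rule card_knn_in_cone_le)
  have sub: "knn_in k P \<subseteq> (\<Union>c\<in>T. C c)"
  proof
    fix x assume x: "x \<in> knn_in k P"
    then have "sgn x \<in> sphere 0 1" by (simp add: knn_in_def norm_sgn)
    then obtain c where "c \<in> T" "dist (sgn x) c < 1/2" using assms(3) by (auto simp: dist_commute)
    then show "x \<in> (\<Union>c\<in>T. C c)" using x by (auto simp: C_def)
  qed
  have "finite (\<Union>c\<in>T. C c)" using assms(2) C by blast
  moreover have "card (\<Union>c\<in>T. C c) \<le> k * card T"
    using card_UN_le[OF assms(2), of C] sum_bounded_above[of T "\<lambda>c. card (C c)" k] C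
    by (simp add: mult.commute)
  ultimately show ?thesis using sub by (meson card_mono finite_subset le_trans)
qed

lemma finite_knn_in:
  fixes P :: "'a::euclidean_space set"
  assumes "locally_finite_conf P"
  shows "finite (knn_in k P)"
proof -
  obtain T where "finite T" "sphere (0::'a) 1 \<subseteq> (\<Union>c\<in>T. ball c (1/2))"
    using compact_finite_ball_cover[of "sphere (0::'a) 1" "1/2"] by auto
  then show ?thesis using card_knn_in_le[OF assms] by blast
qed

lemma finite_knn_nbrs:
  assumes "locally_finite_conf P"
  shows "finite (knn_nbrs k P)"
proof -
  have "knn_nbrs k P \<subseteq> (P \<inter> cball 0 (knn_radius k P)) \<union> insert 0 (knn_in k P)"
    by (auto simp: knn_nbrs_def knn_in_def)
  moreover have "finite (P \<inter> cball 0 (knn_radius k P))"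
    using assms by (simp add: locally_finite_conf_def)
  ultimately show ?thesis using finite_knn_in[OF assms] finite_subset by blast
qed

lemma knn_nbrs_insert_subset:
  assumes "locally_finite_conf \<Psi>" "F \<subseteq> \<Psi>" "card F = Suc k"
    and "knn_radius k (insert p \<Psi>) < norm p" "knn_radius k (shift_conf (insert p \<Psi>) p) < norm p"
  shows "knn_nbrs k (insert p \<Psi>) \<subseteq> knn_nbrs k \<Psi>"
proof
  fix x assume x: "x \<in> knn_nbrs k (insert p \<Psi>)"
  then have "x \<in> \<Psi>" using assms(4,5) by (auto simp: knn_nbrs_def)
  have lf: "locally_finite_conf (insert p \<Psi>)" using assms(1) by (rule locally_finite_conf_insert)
  have "knn_radius k (insert p \<Psi>) \<le> knn_radius k \<Psi>"
    using knn_radius_antimono[OF lf _ assms(2,3)] by blast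
  moreover have "knn_radius k (shift_conf (insert p \<Psi>) x) \<le> knn_radius k (shift_conf \<Psi> x)"
  proof (rule knn_radius_antimono)
    show "locally_finite_conf (shift_conf (insert p \<Psi>) x)" using lf by (rule locally_finite_conf_shift_conf)
    show "shift_conf \<Psi> x \<subseteq> shift_conf (insert p \<Psi>) x" by (auto simp: shift_conf_def)
    show "(\<lambda>z. z - x) ` F \<subseteq> shift_conf \<Psi> x" using assms(2) by (auto simp: shift_conf_def)
    show "card ((\<lambda>z. z - x) ` F) = Suc k" using assms(3) by (simp add: card_translate_eq)
  qed
  ultimately show "x \<in> knn_nbrs k \<Psi>" using x \<open>x \<in> \<Psi>\<close> by (auto simp: knn_nbrs_def)
qed

lemma xi_knn_insert_le:
  assumes "locally_finite_conf \<Psi>" "F \<subseteq> \<Psi>" "card F = Suc k"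
    and "knn_radius k (insert p \<Psi>) < norm p" "knn_radius k (shift_conf (insert p \<Psi>) p) < norm p"
  shows "xi_knn k \<alpha> (insert p \<Psi>) \<le> xi_knn k \<alpha> \<Psi>"
proof -
  have "(\<Sum>x\<in>knn_nbrs k (insert p \<Psi>). norm x powr \<alpha>) \<le> (\<Sum>x\<in>knn_nbrs k \<Psi>. norm x powr \<alpha>)"
    by (rule sum_mono2[OF finite_knn_nbrs[OF assms(1)] knn_nbrs_insert_subset[OF assms]]) simp
  then show ?thesis by (simp add: xi_knn_eq_sum_knn_nbrs)
qed

definition xi_knn_raised :: "nat \<Rightarrow> real \<Rightarrow> 'a::euclidean_space set \<Rightarrow> 'a set" where
  "xi_knn_raised k \<alpha> \<phi> =
     {y \<in> \<phi>. xi_knn k \<alpha> (shift_conf (insert 0 \<phi>) y) > xi_knn k \<alpha> (shift_conf \<phi> y)}"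

lemma xi_knn_raised_subset:
  assumes "locally_finite_conf \<phi>" "0 \<notin> \<phi>" "F \<subseteq> \<phi>" "card F = Suc k"
  shows "xi_knn_raised k \<alpha> \<phi> \<subseteq> knn_in k (insert 0 \<phi>) \<union> knn_out k (insert 0 \<phi>)"
proof
  fix y assume y: "y \<in> xi_knn_raised k \<alpha> \<phi>"
  then have "y \<in> \<phi>" "y \<noteq> 0" using assms(2) by (auto simp: xi_knn_raised_def)
  show "y \<in> knn_in k (insert 0 \<phi>) \<union> knn_out k (insert 0 \<phi>)"
  proof (rule ccontr)
    assume "y \<notin> knn_in k (insert 0 \<phi>) \<union> knn_out k (insert 0 \<phi>)"
    then have radii: "knn_radius k (shift_conf (insert 0 \<phi>) y) < norm y" "knn_radius k (insert 0 \<phi>) < norm y"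
      using \<open>y \<in> \<phi>\<close> \<open>y \<noteq> 0\<close> by (auto simp: knn_in_def knn_out_def)
    have shifted: "insert (-y) (shift_conf \<phi> y) = shift_conf (insert 0 \<phi>) y"
      by (simp add: shift_conf_insert)
    have "xi_knn k \<alpha> (insert (-y) (shift_conf \<phi> y)) \<le> xi_knn k \<alpha> (shift_conf \<phi> y)"
    proof (rule xi_knn_insert_le)
      show "locally_finite_conf (shift_conf \<phi> y)" using assms(1) by (rule locally_finite_conf_shift_conf)
      show "(\<lambda>z. z - y) ` F \<subseteq> shift_conf \<phi> y" using assms(3) by (auto simp: shift_conf_def)
      show "card ((\<lambda>z. z - y) ` F) = Suc k" using assms(4) by (simp add: card_translate_eq)
    qed (use radii in \<open>simp_all add: shifted\<close>)
    then show False using y by (simp add: xi_knn_raised_def shifted)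
  qed
qed

lemma card_xi_knn_raised_le:
  fixes \<phi> T :: "'a::euclidean_space set"
  assumes "locally_finite_conf \<phi>" "inj_on norm \<phi>"
    and "finite T" "sphere 0 1 \<subseteq> (\<Union>c\<in>T. ball c (1/2))"
  shows "finite (xi_knn_raised k \<alpha> \<phi>) \<and> card (xi_knn_raised k \<alpha> \<phi>) \<le> k * card T + k"
proof (cases "0 \<in> \<phi>")
  case True
  then have "xi_knn_raised k \<alpha> \<phi> = {}" by (simp add: xi_knn_raised_def insert_absorb)
  then show ?thesis by simp
next
  case False
  obtain N where N: "xi_knn_raised k \<alpha> \<phi> \<subseteq> N" "finite N" "card N \<le> k * card T + k"
  proof (cases "\<exists>F. F \<subseteq> \<phi> \<and> card F = Suc k")
    case True
    then obtain F where F: "F \<subseteq> \<phi>" "card F = Suc k" by blast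
    have lf: "locally_finite_conf (insert 0 \<phi>)" using assms(1) by (rule locally_finite_conf_insert)
    have "inj_on norm (insert 0 \<phi>)" using assms(2) False by (simp add: image_iff)
    then have "finite (knn_out k (insert 0 \<phi>))" "card (knn_out k (insert 0 \<phi>)) \<le> k"
      using card_knn_out_le[OF lf] by simp_all
    moreover have "finite (knn_in k (insert 0 \<phi>))" "card (knn_in k (insert 0 \<phi>)) \<le> k * card T"
      using card_knn_in_le[OF lf assms(3,4)] by simp_all
    moreover have "card (knn_in k (insert 0 \<phi>) \<union> knn_out k (insert 0 \<phi>))
        \<le> card (knn_in k (insert 0 \<phi>)) + card (knn_out k (insert 0 \<phi>))"
      by (rule card_Un_le)
    ultimately show ?thesis
      using that[OF xi_knn_raised_subset[OF assms(1) False F]] by simp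
  next
    case False
    then have "finite \<phi> \<and> card \<phi> \<le> k" by (intro finite_card_le_if_no_subset_card_Suc) auto
    then show ?thesis using that[of \<phi>] by (auto simp: xi_knn_raised_def)
  qed
  then show ?thesis using card_mono[OF N(2,1)] finite_subset[OF N(1,2)] by simp
qed

definition annulus :: "real \<Rightarrow> real \<Rightarrow> 'a::euclidean_space set" where
  "annulus a b = ball 0 b - ball 0 a"

lemma annulus_sets [measurable]: "annulus a b \<in> sets lborel"
  by (simp add: annulus_def sets.Diff)

lemma bounded_annulus: "bounded (annulus a b)"
  unfolding annulus_def by (rule bounded_subset[OF bounded_ball Diff_subset])

lemma power_diff_le_mult:
  fixes a b :: real
  assumes "0 \<le> a" "a \<le> b"
  shows "b ^ n - a ^ n \<le> real n * b ^ (n - 1) * (b - a)"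
proof (induction n)
  case (Suc n)
  have "b ^ Suc n - a ^ Suc n = b * (b ^ n - a ^ n) + a ^ n * (b - a)" by (simp add: algebra_simps)
  also have "\<dots> \<le> b * (real n * b ^ (n - 1) * (b - a)) + b ^ n * (b - a)"
    using Suc.IH assms by (intro add_mono mult_left_mono mult_right_mono power_mono) auto
  also have "\<dots> = real (Suc n) * b ^ (Suc n - 1) * (b - a)"
    by (cases n) (simp_all add: algebra_simps)
  finally show ?case .
qed simp

lemma measure_annulus:
  assumes "0 \<le> a" "a \<le> b"
  shows "measure lborel (annulus a b :: 'a::euclidean_space set)
    = measure lborel (ball (0::'a) 1) * (b ^ DIM('a) - a ^ DIM('a))"
proof -
  have "measure lborel (annulus a b :: 'a set) = measure lborel (ball (0::'a) b) - measure lborel (ball (0::'a) a)"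
    unfolding annulus_def using assms emeasure_lborel_ball_finite[of "0::'a" b]
    by (intro measure_Diff) (auto simp: subset_ball)
  then show ?thesis
    using content_ball_conv_unit_ball[of b "0::'a"] content_ball_conv_unit_ball[of a "0::'a"] assms
    by (simp add: algebra_simps)
qed

lemma measure_annulus_le:
  assumes "0 \<le> a" "a \<le> b" "b \<le> R"
  shows "measure lborel (annulus a b :: 'a::euclidean_space set)
    \<le> measure lborel (ball (0::'a) 1) * DIM('a) * R ^ (DIM('a) - 1) * (b - a)"
proof -
  have "b ^ DIM('a) - a ^ DIM('a) \<le> DIM('a) * b ^ (DIM('a) - 1) * (b - a)"
    using assms(1,2) by (rule power_diff_le_mult)
  also have "\<dots> \<le> DIM('a) * R ^ (DIM('a) - 1) * (b - a)"
    using assms by (intro mult_right_mono mult_left_mono power_mono) auto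
  finally show ?thesis
    unfolding measure_annulus[OF assms(1,2)] by (simp add: mult.assoc mult_left_mono)
qed

lemma sum_measure_annulus_partition:
  assumes "0 \<le> h"
  shows "(\<Sum>j<n. measure lborel (annulus (real j * h) ((real j + 1) * h) :: 'a::euclidean_space set))
    = measure lborel (ball (0::'a) 1) * (real n * h) ^ DIM('a)"
proof -
  define f where "f j = (real j * h) ^ DIM('a)" for j
  have "measure lborel (annulus (real j * h) ((real j + 1) * h) :: 'a set)
      = measure lborel (ball (0::'a) 1) * (f (Suc j) - f j)" for j
    using measure_annulus[where 'a='a, of "real j * h" "(real j + 1) * h"] assms
    by (simp add: f_def add.commute mult_right_mono)
  then have "(\<Sum>j<n. measure lborel (annulus (real j * h) ((real j + 1) * h) :: 'a set))
      = measure lborel (ball (0::'a) 1) * (\<Sum>j<n. f (Suc j) - f j)"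
    by (simp add: sum_distrib_left)
  also have "\<dots> = measure lborel (ball (0::'a) 1) * (real n * h) ^ DIM('a)"
    by (simp only: sum_lessThan_telescope) (simp add: f_def)
  finally show ?thesis .
qed

lemma annulus_partition_cover:
  fixes x :: "'a::euclidean_space"
  assumes "norm x < R"
  shows "\<exists>j<Suc m. x \<in> annulus (real j * (R / Suc m)) ((real j + 1) * (R / Suc m))"
proof -
  define h where "h = R / Suc m"
  have "0 < R" using assms norm_ge_zero[of x] by linarith
  then have "0 < h" by (simp add: h_def)
  define j where "j = nat \<lfloor>norm x / h\<rfloor>"
  have "real j = of_int \<lfloor>norm x / h\<rfloor>" using \<open>0 < h\<close> by (simp add: j_def)
  then have "real j \<le> norm x / h" "norm x / h < real j + 1" by linarith+
  then have "real j * h \<le> norm x" "norm x < (real j + 1) * h"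
    using \<open>0 < h\<close> by (simp_all add: field_simps)
  moreover have "norm x / h < Suc m"
    using mult_strict_right_mono[OF assms, of "Suc m"] \<open>0 < R\<close> by (simp add: h_def field_simps)
  then have "j < Suc m" using \<open>real j \<le> norm x / h\<close> by linarith
  ultimately show ?thesis by (auto simp: annulus_def h_def)
qed

lemma annulus_partition_card_ge_2:
  assumes "locally_finite_conf P" "x \<in> P" "y \<in> P" "norm x = norm y" "x \<noteq> y" "norm x < R"
  shows "\<exists>j<Suc m. 2 \<le> card (P \<inter> annulus (real j * (R / Suc m)) ((real j + 1) * (R / Suc m)))"
proof -
  obtain j where "j < Suc m" and x: "x \<in> annulus (real j * (R / Suc m)) ((real j + 1) * (R / Suc m))"
    using annulus_partition_cover[OF assms(6)] by blast
  moreover have "y \<in> annulus (real j * (R / Suc m)) ((real j + 1) * (R / Suc m))"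
    using x assms(4) by (simp add: annulus_def)
  moreover have "finite (P \<inter> annulus (real j * (R / Suc m)) ((real j + 1) * (R / Suc m)))"
    using assms(1) bounded_annulus unfolding locally_finite_conf_def by blast
  ultimately show ?thesis
    using assms(2,3,5) card_mono[of _ "{x, y}"] by (metis IntI card_2_iff empty_subsetI insert_subset)
qed

lemma hom_poisson_pp_prob_space: "hom_poisson_pp M X \<Longrightarrow> prob_space M"
  by (simp add: hom_poisson_pp_def)

lemma hom_poisson_pp_locally_finite:
  "hom_poisson_pp M X \<Longrightarrow> \<omega> \<in> space M \<Longrightarrow> locally_finite_conf (X \<omega>)"
  by (simp add: hom_poisson_pp_def)

lemma hom_poisson_pp_count_sets:
  assumes "hom_poisson_pp M X" "B \<in> sets lborel" "bounded B"
  shows "{\<omega>\<in>space M. Q (card (X \<omega> \<inter> B))} \<in> sets M"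
proof -
  have "(\<lambda>\<omega>. card (X \<omega> \<inter> B)) \<in> measurable M (count_space UNIV)"
    using assms by (simp add: hom_poisson_pp_def)
  then have "(\<lambda>\<omega>. card (X \<omega> \<inter> B)) -` {n. Q n} \<inter> space M \<in> sets M" by (rule measurable_sets) simp
  then show ?thesis by (simp add: vimage_def Int_def conj_commute)
qed

lemma hom_poisson_pp_prob_count_ge_2_le:
  assumes "hom_poisson_pp M X" "B \<in> sets lborel" "bounded B"
  shows "measure M {\<omega>\<in>space M. 2 \<le> card (X \<omega> \<inter> B)} \<le> measure lborel B ^ 2"
proof -
  interpret prob_space M using assms(1) by (rule hom_poisson_pp_prob_space)
  define l where "l = measure lborel B"
  have dist: "measure M {\<omega>\<in>space M. card (X \<omega> \<inter> B) = n} = exp (- l) * l ^ n / fact n" for n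
    using assms by (simp add: hom_poisson_pp_def l_def)
  let ?A = "\<lambda>n. {\<omega>\<in>space M. card (X \<omega> \<inter> B) = n}"
  have "{\<omega>\<in>space M. 2 \<le> card (X \<omega> \<inter> B)} = space M - (?A 0 \<union> ?A 1)" by auto
  moreover have "measure M (?A 0 \<union> ?A 1) = exp (- l) * (1 + l)"
    using dist[of 0] dist[of 1] hom_poisson_pp_count_sets[OF assms]
    by (subst finite_measure_Union) (auto simp: algebra_simps)
  ultimately have "measure M {\<omega>\<in>space M. 2 \<le> card (X \<omega> \<inter> B)} = 1 - exp (- l) * (1 + l)"
    using hom_poisson_pp_count_sets[OF assms] by (simp add: prob_compl sets.Un)
  also have "\<dots> \<le> l ^ 2"
  proof -
    have "(1 - l) * (1 + l) \<le> exp (- l) * (1 + l)"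
      using exp_ge_add_one_self[of "- l"] by (intro mult_right_mono) (auto simp: l_def)
    then show ?thesis by (simp add: power2_eq_square algebra_simps)
  qed
  finally show ?thesis by (simp add: l_def)
qed

lemma hom_poisson_pp_prob_annuli_count_ge_2_le:
  fixes X :: "'m \<Rightarrow> 'a::euclidean_space set" and R :: real and m :: nat
  assumes "hom_poisson_pp M X" "0 \<le> R"
  defines "h \<equiv> R / Suc m" and "V \<equiv> measure lborel (ball (0::'a) 1)"
  shows "measure M (\<Union>j<Suc m. {\<omega>\<in>space M. 2 \<le> card (X \<omega> \<inter> annulus (real j * h) ((real j + 1) * h))})
    \<le> (V * R ^ DIM('a)) * (V * DIM('a) * R ^ (DIM('a) - 1) * h)"
proof -
  interpret prob_space M using assms(1) by (rule hom_poisson_pp_prob_space)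
  let ?ann = "\<lambda>j. annulus (real j * h) ((real j + 1) * h) :: 'a set"
  let ?A = "\<lambda>j. {\<omega>\<in>space M. 2 \<le> card (X \<omega> \<inter> ?ann j)}"
  have "0 \<le> h" using assms(2) by (simp add: h_def)
  have small: "measure lborel (?ann j) \<le> V * DIM('a) * R ^ (DIM('a) - 1) * h" if "j < Suc m" for j
  proof -
    have "(real j + 1) * h \<le> R"
      using that assms(2) mult_left_mono[of "real j" "real m" R] by (simp add: h_def field_simps)
    then show ?thesis unfolding V_def
      using measure_annulus_le[of "real j * h" "(real j + 1) * h" R] \<open>0 \<le> h\<close>
      by (simp add: algebra_simps)
  qed
  have "measure M (\<Union>j<Suc m. ?A j) \<le> (\<Sum>j<Suc m. measure M (?A j))"
    using hom_poisson_pp_count_sets[OF assms(1) annulus_sets bounded_annulus]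
    by (intro measure_UNION_le) auto
  also have "\<dots> \<le> (\<Sum>j<Suc m. measure lborel (?ann j) * (V * DIM('a) * R ^ (DIM('a) - 1) * h))"
  proof (rule sum_mono)
    fix j assume "j \<in> {..<Suc m}"
    then have "measure lborel (?ann j) ^ 2 \<le> measure lborel (?ann j) * (V * DIM('a) * R ^ (DIM('a) - 1) * h)"
      using small by (simp add: power2_eq_square mult_left_mono)
    then show "measure M (?A j) \<le> measure lborel (?ann j) * (V * DIM('a) * R ^ (DIM('a) - 1) * h)"
      using hom_poisson_pp_prob_count_ge_2_le[OF assms(1) annulus_sets bounded_annulus] by (meson order_trans)
  qed
  also have "\<dots> = (\<Sum>j<Suc m. measure lborel (?ann j)) * (V * DIM('a) * R ^ (DIM('a) - 1) * h)"
    by (simp only: sum_distrib_right)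
  also have "\<dots> = (V * R ^ DIM('a)) * (V * DIM('a) * R ^ (DIM('a) - 1) * h)"
  proof -
    have "real (Suc m) * h = R" by (simp add: h_def)
    then show ?thesis
      using sum_measure_annulus_partition[where 'a='a, OF \<open>0 \<le> h\<close>, of "Suc m"] by (simp only: V_def)
  qed
  finally show ?thesis .
qed

text \<open>Points of equal norm \<open>< R\<close> fall into a common annulus of any partition of \<open>ball 0 R\<close> into
  \<open>m + 1\<close> annuli of equal width, and the probability of that is \<open>O(1 / m)\<close>.\<close>

lemma AE_hom_poisson_pp_inj_on_norm:
  fixes X :: "'m \<Rightarrow> 'a::euclidean_space set"
  assumes "hom_poisson_pp M X"
  shows "AE \<omega> in M. inj_on norm (X \<omega>)"
proof -
  interpret prob_space M using assms by (rule hom_poisson_pp_prob_space)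
  define E where "E R m = (\<Union>j<Suc m. {\<omega>\<in>space M.
      2 \<le> card (X \<omega> \<inter> annulus (real j * (R / Suc m)) ((real j + 1) * (R / Suc m)))})" for R m
  define V where "V = measure lborel (ball (0::'a) 1)"
  have E_sets: "E R m \<in> sets M" for R m
    unfolding E_def using hom_poisson_pp_count_sets[OF assms annulus_sets bounded_annulus] by auto
  have "(\<Inter>m. E (real n) m) \<in> null_sets M" for n
  proof -
    define C where "C = (V * real n ^ DIM('a)) * (V * DIM('a) * real n ^ (DIM('a) - 1) * real n)"
    have "measure M (\<Inter>m. E (real n) m) \<le> C / real (Suc m)" for m
    proof -
      have "measure M (\<Inter>m. E (real n) m) \<le> measure M (E (real n) m)"
        using E_sets by (intro finite_measure_mono) auto
      also have "\<dots> \<le> C / real (Suc m)"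
        using hom_poisson_pp_prob_annuli_count_ge_2_le[OF assms, of "real n" m]
        by (simp add: E_def C_def V_def)
      finally show ?thesis .
    qed
    then have "measure M (\<Inter>m. E (real n) m) \<le> 0"
      using LIMSEQ_le_const[OF LIMSEQ_Suc[OF lim_const_over_n[of C]]] by auto
    then show ?thesis using E_sets by (auto simp: emeasure_eq_measure null_sets_def measure_le_0_iff)
  qed
  moreover have "{\<omega>\<in>space M. \<not> inj_on norm (X \<omega>)} \<subseteq> (\<Union>n. \<Inter>m. E (real n) m)"
  proof
    fix \<omega> assume "\<omega> \<in> {\<omega>\<in>space M. \<not> inj_on norm (X \<omega>)}"
    then obtain x y where \<omega>: "\<omega> \<in> space M" and xy: "x \<in> X \<omega>" "y \<in> X \<omega>" "norm x = norm y" "x \<noteq> y"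
      by (auto simp: inj_on_def)
    obtain n :: nat where "norm x < n" using reals_Archimedean2 by blast
    have "\<omega> \<in> E (real n) m" for m
      using annulus_partition_card_ge_2[OF hom_poisson_pp_locally_finite[OF assms \<omega>] xy \<open>norm x < n\<close>, of m] \<omega>
      by (auto simp: E_def)
    then show "\<omega> \<in> (\<Union>n. \<Inter>m. E (real n) m)" by blast
  qed
  ultimately show ?thesis by (intro AE_I'[of "\<Union>n. \<Inter>m. E (real n) m"]) auto
qed

theorem lemma2p1:
  fixes M :: "'m measure" and X :: "'m \<Rightarrow> 'a::euclidean_space set"
    and k :: nat and \<alpha> :: real
  assumes "k \<ge> 1" and "\<alpha> \<ge> 0" and "hom_poisson_pp M X"
  shows "\<exists>k'::nat. k' \<ge> 1 \<and>
    (AE \<omega> in M.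
       finite {y \<in> X \<omega>. xi_knn k \<alpha> (shift_conf (insert 0 (X \<omega>)) y) > xi_knn k \<alpha> (shift_conf (X \<omega>) y)} \<and>
       card {y \<in> X \<omega>. xi_knn k \<alpha> (shift_conf (insert 0 (X \<omega>)) y) > xi_knn k \<alpha> (shift_conf (X \<omega>) y)} \<le> k')"
proof -
  obtain T where T: "finite T" "sphere (0::'a) 1 \<subseteq> (\<Union>c\<in>T. ball c (1/2))"
    using compact_finite_ball_cover[of "sphere (0::'a) 1" "1/2"] by auto
  have "AE \<omega> in M. finite (xi_knn_raised k \<alpha> (X \<omega>)) \<and> card (xi_knn_raised k \<alpha> (X \<omega>)) \<le> k * card T + k"
    using AE_hom_poisson_pp_inj_on_norm[OF assms(3)] AE_space
  proof eventually_elim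
    case (elim \<omega>)
    show ?case
      using card_xi_knn_raised_le[OF hom_poisson_pp_locally_finite[OF assms(3) elim(2)] elim(1) T] .
  qed
  moreover have "1 \<le> k * card T + k" using assms(1) by simp
  ultimately show ?thesis unfolding xi_knn_raised_def by (intro exI[of _ "k * card T + k"]) simp
qed

end
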